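(* Let $n\ge0$. For every $m\ge0$, the $m$-generators of the polygraph freely generating $\mathcal O_n$ (obtained by iterating the free-expansion construction from the empty polygraph) are exactly the cells $\langle i_0,\dots,i_m\rangle$ with $0\le i_0<i_1<\cdots<i_m\le n$, and these are pairwise distinct; hence the $m$-generators of $\mathcal O_n$ are in canonical bijection with the injective order-preserving maps $[m]\to[n]$. Moreover, if $0\le i_0\le\cdots\le i_m\le n$ is nondecreasing but not strictly increasing, then $\langle i_0,\dots,i_m\rangle$ is an identity cell; for instance $\langle 0,0,i_2,\dots,i_m\rangle=1_{\langle 0,i_2,\dots,i_m\rangle}$.
   Context: All $\omega$-categories are strict and globular. An expansion on an $\omega$-category $C$ consists of a $0$-cell $o$ and, for each $n$-cell $x$, an $(n+1)$-cell $\xi_x$ with $\xi_x:o\to x$ if $n=0$ and $\xi_x:\xi_{t(x)}\to x\star_0\xi_{s_0(x)}\star_1\cdots\star_{n-1}\xi_{s_{n-1}(x)}$ if $n>0$ (with $s_i,t_i$ iterated sources/targets, $\star_p$ the $p$-composition, lower-dimensional cells standing for iterated identities, composites bracketed giving priority to the lowest-dimensional composition), satisfying $\xi_{y\star_p x}=t_{p+1}(y)\star_0\xi_{s_0(x)}\star_1\cdots\star_{p-1}\xi_{s_{p-1}(x)}\star_p\xi_x\star_{p+1}\xi_y$, $\xi_{1_u}=1_{\xi_u}$, $\xi_{\xi_u}=1_{\xi_u}$, $\xi_o=1_o$. $T=UF$ is the monad on $\omega\mathbf{Cat}$ induced by the forgetful functor $U$ from $\omega$-categories with expansion (morphisms preserving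 $o$ and $\xi$) and its left adjoint $F$; $\eta$ is its unit. $\mathcal O_k=T^{k+1}(\emptyset)$ for $k\ge-1$ ($\mathcal O_{-1}=\emptyset$), with origin $o_k$ and expansion $\xi$ of $\mathcal O_k=T(\mathcal O_{k-1})$ for $k\ge0$; $\eta^i:\mathcal O_{k}\to\mathcal O_{k+i}$ denotes the composite of units $\eta_{\mathcal O_{k+i-1}}\circ\cdots\circ\eta_{\mathcal O_k}$. For a polygraph $S$, $T(S^* )$ is freely generated by the polygraph with $n$-generators $\eta(a)$ ($a\in S_n$), together with the origin if $n=0$ and $\xi_{\eta(a)}$ ($a\in S_{n-1}$) if $n\ge1$; iterating from the empty polygraph gives the polygraph freely generating $\mathcal O_n$. Simplicial notation: for $0\le i_0\le\cdots\le i_m\le n$, the cell $\langle i_0,\dots,i_m\rangle$ of $\mathcal O_n$ is defined by induction on $m$: $\langle i\rangle=\eta^{i}(o_{n-i})$, and for $m\ge1$, $\langle i_0,\dots,i_m\rangle=\eta^{i_0}\big(\xi_{\langle i_1-i_0,\dots,i_m-i_0\rangle}\big)$ where $\langle i_1-i_0,\dots,i_m-i_0\rangle$ is the cell so defined in $\mathcal O_{n-i_0}$ and $\xi$ is the expansion of $\mathcal O_{n-i_0}$. *)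

theory Defs
  imports Main "HOL-Library.FuncSet"
begin

text \<open>All the omega-categories O_k = T^(k+1)(empty) are presented as term models
(free strict globular omega-category with expansion on the previous one).
A term of level k is built from: Bs t (the unit eta applied to a cell t of
O_(k-1)), Or (the origin o_k), Xi t (the expansion xi_t), Cmp p y x
(the p-composite y *_p x of two cells of equal dimension) and Idt t
(the identity 1_t).\<close>

datatype tm = Bs tm | Or | Xi tm | Cmp nat tm tm | Idt tm

fun dim :: "tm \<Rightarrow> nat" where
  "dim (Bs t) = dim t"
| "dim Or = 0"
| "dim (Xi t) = Suc (dim t)"
| "dim (Cmp p y x) = dim x"
| "dim (Idt t) = Suc (dim t)"

definition lift :: "nat \<Rightarrow> tm \<Rightarrow> tm" where
  "lift j t = (Idt ^^ j) t"

definition cmp :: "nat \<Rightarrow> tm \<Rightarrow> tm \<Rightarrow> tm" where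
  "cmp p y x = (let d = max (dim x) (dim y) in Cmp p (lift (d - dim y) y) (lift (d - dim x) x))"

text \<open>sk True k t is the iterated k-source s_k(t), sk False k t the iterated
k-target t_k(t) (equal to t when k is at least the dimension of t).
For the expansion, t_k(xi_x) = t_k x *_0 xi_(s_0 ..) *_1 ... *_(k-1) xi_(s_(k-1) ..),
bracketed to the left (lowest composition first).\<close>
function sk :: "bool \<Rightarrow> nat \<Rightarrow> tm \<Rightarrow> tm" where
  "sk b k (Bs t) = Bs (sk b k t)"
| "sk b k Or = Or"
| "sk b k (Idt x) = (if Suc (dim x) \<le> k then Idt x else if k = dim x then x else sk b k x)"
| "sk b k (Cmp p y x) = (if dim x \<le> k then Cmp p y x
      else if k \<le> p then (if b then sk b k x else sk b k y)
      else Cmp p (sk b k y) (sk b k x))"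
| "sk b k (Xi x) = (if Suc (dim x) \<le> k then Xi x
      else if b then (if k = 0 then Or else Xi (sk False (k - 1) x))
      else (let z = sk False k x in
              foldl (\<lambda>acc (i, c). cmp i acc c) z
                 (zip [0..<k] (map (\<lambda>i. Xi (sk True i z)) [0..<k]))))"
  by pat_completeness auto
termination
  by (relation "measures [\<lambda>(b, k, t). k, \<lambda>(b, k, t). size t]") auto

text \<open>The expansion target x *_0 xi_(s_0 x) *_1 ... *_(n-1) xi_(s_(n-1) x) of xi_x.\<close>
definition Wx :: "tm \<Rightarrow> tm" where
  "Wx x = foldl (\<lambda>acc (i, c). cmp i acc c) x
            (zip [0..<dim x] (map (\<lambda>i. Xi (sk True i x)) [0..<dim x]))"

text \<open>Right-hand side of the axiom for xi_(y *_p x):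
t_(p+1)(y) *_0 xi_(s_0 x) *_1 ... *_(p-1) xi_(s_(p-1) x) *_p xi_x *_(p+1) xi_y.\<close>
definition XiCmpRhs :: "nat \<Rightarrow> tm \<Rightarrow> tm \<Rightarrow> tm" where
  "XiCmpRhs p y x =
     cmp (Suc p)
       (cmp p (foldl (\<lambda>acc (i, c). cmp i acc c) (sk False (Suc p) y)
                 (zip [0..<p] (map (\<lambda>i. Xi (sk True i x)) [0..<p])))
          (Xi x))
       (Xi y)"

text \<open>Well-formedness and equality of cells of T(C), where C is given by
well-formedness bw and equality be on base terms (C is again a term model).\<close>
inductive wfT and eqT for bw :: "tm \<Rightarrow> bool" and be :: "tm \<Rightarrow> tm \<Rightarrow> bool" where
  wf_Bs: "bw x \<Longrightarrow> wfT bw be (Bs x)"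
| wf_Or: "wfT bw be Or"
| wf_Xi: "wfT bw be x \<Longrightarrow> wfT bw be (Xi x)"
| wf_Idt: "wfT bw be x \<Longrightarrow> wfT bw be (Idt x)"
| wf_Cmp: "wfT bw be x \<Longrightarrow> wfT bw be y \<Longrightarrow> dim x = dim y \<Longrightarrow> p < dim x \<Longrightarrow>
     eqT bw be (sk False p x) (sk True p y) \<Longrightarrow> wfT bw be (Cmp p y x)"
| wf_sk: "wfT bw be t \<Longrightarrow> wfT bw be (sk b k t)"
| eq_refl: "wfT bw be t \<Longrightarrow> eqT bw be t t"
| eq_sym: "eqT bw be t u \<Longrightarrow> eqT bw be u t"
| eq_trans: "eqT bw be t u \<Longrightarrow> eqT bw be u v \<Longrightarrow> eqT bw be t v"
| eq_Bs: "be x y \<Longrightarrow> eqT bw be (Bs x) (Bs y)"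
| eq_Xi: "eqT bw be x y \<Longrightarrow> eqT bw be (Xi x) (Xi y)"
| eq_Idt: "eqT bw be x y \<Longrightarrow> eqT bw be (Idt x) (Idt y)"
| eq_Cmp: "eqT bw be x x' \<Longrightarrow> eqT bw be y y' \<Longrightarrow> wfT bw be (Cmp p y x) \<Longrightarrow>
     wfT bw be (Cmp p y' x') \<Longrightarrow> eqT bw be (Cmp p y x) (Cmp p y' x')"
| eq_sk: "eqT bw be t u \<Longrightarrow> eqT bw be (sk b k t) (sk b k u)"
  \<comment> \<open>eta is an omega-functor\<close>
| eta_Cmp: "bw (Cmp p y x) \<Longrightarrow> wfT bw be (Cmp p (Bs y) (Bs x)) \<Longrightarrow>
     eqT bw be (Bs (Cmp p y x)) (Cmp p (Bs y) (Bs x))"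
| eta_Idt: "bw (Idt x) \<Longrightarrow> eqT bw be (Bs (Idt x)) (Idt (Bs x))"
| assoc: "wfT bw be (Cmp p (Cmp p z y) x) \<Longrightarrow> wfT bw be (Cmp p z (Cmp p y x)) \<Longrightarrow>
     eqT bw be (Cmp p (Cmp p z y) x) (Cmp p z (Cmp p y x))"
| unit_l: "wfT bw be (Cmp p (lift (dim x - p) (sk False p x)) x) \<Longrightarrow>
     eqT bw be (Cmp p (lift (dim x - p) (sk False p x)) x) x"
| unit_r: "wfT bw be (Cmp p x (lift (dim x - p) (sk True p x))) \<Longrightarrow>
     eqT bw be (Cmp p x (lift (dim x - p) (sk True p x))) x"
| interchange: "q < p \<Longrightarrow> wfT bw be (Cmp q (Cmp p y' y) (Cmp p x' x)) \<Longrightarrow>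
     wfT bw be (Cmp p (Cmp q y' x') (Cmp q y x)) \<Longrightarrow>
     eqT bw be (Cmp q (Cmp p y' y) (Cmp p x' x)) (Cmp p (Cmp q y' x') (Cmp q y x))"
| id_cmp: "wfT bw be (Cmp p (Idt y) (Idt x)) \<Longrightarrow> wfT bw be (Idt (Cmp p y x)) \<Longrightarrow>
     eqT bw be (Cmp p (Idt y) (Idt x)) (Idt (Cmp p y x))"
| xi_cmp: "wfT bw be (Cmp p y x) \<Longrightarrow> wfT bw be (XiCmpRhs p y x) \<Longrightarrow>
     eqT bw be (Xi (Cmp p y x)) (XiCmpRhs p y x)"
| xi_id: "wfT bw be u \<Longrightarrow> eqT bw be (Xi (Idt u)) (Idt (Xi u))"
| xi_xi: "wfT bw be u \<Longrightarrow> eqT bw be (Xi (Xi u)) (Idt (Xi u))"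
| xi_or: "eqT bw be (Xi Or) (Idt Or)"

text \<open>The term models of O_k, k \<ge> 0 (O_(-1) is empty).\<close>
fun lev :: "nat \<Rightarrow> (tm \<Rightarrow> bool) \<times> (tm \<Rightarrow> tm \<Rightarrow> bool)" where
  "lev 0 = (wfT (\<lambda>_. False) (\<lambda>_ _. False), eqT (\<lambda>_. False) (\<lambda>_ _. False))"
| "lev (Suc k) = (wfT (fst (lev k)) (snd (lev k)), eqT (fst (lev k)) (snd (lev k)))"

definition wfO :: "nat \<Rightarrow> tm \<Rightarrow> bool" where "wfO k = fst (lev k)"
definition eqO :: "nat \<Rightarrow> tm \<Rightarrow> tm \<Rightarrow> bool" where "eqO k = snd (lev k)"

definition cellO :: "nat \<Rightarrow> tm \<Rightarrow> tm set" where "cellO k t = {u. eqO k t u}"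

fun Gen :: "nat \<Rightarrow> nat \<Rightarrow> tm set" where
  "Gen 0 m = (if m = 0 then {Or} else {})"
| "Gen (Suc k) m = Bs ` Gen k m \<union> (if m = 0 then {Or} else Xi ` Bs ` Gen k (m - 1))"

text \<open>Simplicial notation: sc [i0,...,im] = <i0,...,im>, i.e.
<i> = eta^i(o) and <i0,...,im> = eta^i0(xi_<i1-i0,...,im-i0>).\<close>
function sc :: "nat list \<Rightarrow> tm" where
  "sc [] = Or"
| "sc [i] = (Bs ^^ i) Or"
| "sc (i # j # r) = (Bs ^^ i) (Xi (sc (map (\<lambda>l. l - i) (j # r))))"
  by pat_completeness auto
termination by (relation "measure length") auto

definition SI :: "nat \<Rightarrow> nat \<Rightarrow> nat list set" where
  "SI n m = {is. length is = Suc m \<and> sorted_wrt (<) is \<and> (\<forall>i\<in>set is. i \<le> n)}"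

end

theory Submission
  imports Defs
begin

(* Equal cells of O_n involve the same vertices of the simplex [n]. To see this, assign to every
   term the set verts of vertices 0..n it involves, together with the vertex sets of all its
   iterated sources and targets. On terms whose composites match at this level of vertex data
   ("coherent" terms), every generating equation of the term models (functoriality of eta, the
   omega-category axioms and the expansion axioms) preserves these data, so equal cells have equal
   vertex sets. Since <i_0,...,i_m> involves exactly the vertices i_0,...,i_m, distinct strictly
   increasing sequences give distinct cells.
   The generators of O_(n+1) are eta of those of O_n (sequences not containing 0, shifted) together
   with the origin and xi_(eta a) (sequences 0 < i_1 < ...). A repeated index produces an identity
   through xi_o = 1_o and xi_(xi_u) = 1_(xi_u), propagated by xi_(1_u) = 1_(xi_u) and along eta. *)

fun verts :: "tm \<Rightarrow> nat set" where
  "verts (Bs t) = Suc ` verts t"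
| "verts Or = {0}"
| "verts (Xi x) = insert 0 (verts x)"
| "verts (Cmp p y x) = verts y \<union> verts x"
| "verts (Idt x) = verts x"

(* face_verts b k t equals verts (sk b k t), the vertex set of the k-source (b) or k-target of t,
   but is read off t directly (see verts_sk). *)
fun face_verts :: "bool \<Rightarrow> nat \<Rightarrow> tm \<Rightarrow> nat set" where
  "face_verts b k (Bs t) = Suc ` face_verts b k t"
| "face_verts b k Or = {0}"
| "face_verts b k (Idt x) = (if dim x \<le> k then verts x else face_verts b k x)"
| "face_verts b k (Cmp p y x) = (if dim x \<le> k then verts y \<union> verts x
      else if k \<le> p then (if b then face_verts b k x else face_verts b k y)
      else face_verts b k y \<union> face_verts b k x)"
| "face_verts b k (Xi x) = (if Suc (dim x) \<le> k then insert 0 (verts x)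
      else if b then (if k = 0 then {0} else insert 0 (face_verts False (k - 1) x))
      else (if k = 0 then face_verts False 0 x
            else insert 0 (face_verts False k x \<union> (\<Union>i<k. face_verts True i x))))"

fun coherent :: "tm \<Rightarrow> bool" where
  "coherent (Bs t) = coherent t"
| "coherent Or = True"
| "coherent (Xi x) = coherent x"
| "coherent (Idt x) = coherent x"
| "coherent (Cmp p y x) = (coherent x \<and> coherent y \<and> dim y = dim x \<and> p < dim x
     \<and> (\<forall>b k. k < p \<longrightarrow> face_verts b k y = face_verts b k x)
     \<and> face_verts False p x = face_verts True p y)"

lemma face_verts_above_dim: "dim t \<le> k \<Longrightarrow> face_verts b k t = verts t"
  by (induction t arbitrary: b k) auto

lemma face_verts_Idt [simp]: "face_verts b k (Idt x) = face_verts b k x"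
  using face_verts_above_dim by auto

declare face_verts.simps(3) [simp del]

lemma face_verts_subset_verts: "face_verts b k t \<subseteq> verts t"
proof (induction t arbitrary: b k)
  case (Xi x)
  then show ?case by (auto simp: subset_insertI2)
next
  case (Cmp p y x)
  then show ?case by (simp add: le_supI1 le_supI2)
qed (auto simp: image_mono)

lemma face_verts_mono:
  "coherent t \<Longrightarrow> k < k' \<Longrightarrow> face_verts b k t \<subseteq> face_verts b' k' t"
proof (induction t arbitrary: b k b' k')
  case (Xi x)
  have mono: "face_verts c i x \<subseteq> face_verts c' j x" if "i \<le> j" "c = c' \<or> i < j" for c c' i j
  proof (cases "i = j")
    case False
    then show ?thesis using that Xi by simp
  qed (use that in simp)
  show ?case
  proof (cases "Suc (dim x) \<le> k'")
    case True then show ?thesis using face_verts_subset_verts[of b k "Xi x"]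
      by (simp del: face_verts.simps add: face_verts_above_dim)
  next
    case False
    \<comment> \<open>both faces are squeezed around the target of dimension k' - 1 of x\<close>
    have "(\<Union>i<k. face_verts True i x) \<subseteq> face_verts False (k' - 1) x"
      using Xi.prems(2) by (intro UN_least mono) auto
    moreover have "face_verts False i x \<subseteq> face_verts False (k' - 1) x" if "i < k'" for i
      using that by (intro mono) auto
    ultimately have "face_verts b k (Xi x) \<subseteq> insert 0 (face_verts False (k' - 1) x)"
      using False Xi.prems(2) by (cases b; cases "k = 0") (auto simp: subset_insertI2)
    also have "\<dots> \<subseteq> face_verts b' k' (Xi x)"
      using False Xi.prems(2) mono[of "k' - 1" k' False False] by (cases b') auto
    finally show ?thesis .
  qed
next
  case (Cmp p y x)
  then have x: "face_verts b k x \<subseteq> face_verts b' k' x" and y: "face_verts b k y \<subseteq> face_verts b' k' y"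
    and yx: "k < p \<Longrightarrow> face_verts b k y = face_verts b k x" by auto
  show ?case
  proof (cases "dim x \<le> k'")
    case True then show ?thesis using face_verts_subset_verts[of b k "Cmp p y x"]
      by (simp del: face_verts.simps add: face_verts_above_dim)
  next
    case False
    then show ?thesis using Cmp.prems(2) x y yx by (cases "k' \<le> p"; cases b; cases b') auto
  qed
qed (simp_all add: image_mono)

lemma lift_simps [simp]:
  "dim (lift j t) = j + dim t" "verts (lift j t) = verts t"
  "face_verts b k (lift j t) = face_verts b k t" "coherent (lift j t) = coherent t"
  by (induction j) (simp_all add: lift_def)

lemma lift_0 [simp]: "lift 0 t = t"
  by (simp add: lift_def)

lemma cmp_dim_le: "dim x \<le> dim y \<Longrightarrow> cmp p y x = Cmp p y (lift (dim y - dim x) x)"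
  by (simp add: cmp_def max_def)

lemma sk_above_dim: "dim t \<le> k \<Longrightarrow> sk b k t = t"
  by (induction t arbitrary: b) auto

(* z *_0 xi_(s_0 w) *_1 ... *_(j-1) xi_(s_(j-1) w): the shape of both the target of xi_x and the
   expansion of a composite. *)
definition xi_chain :: "tm \<Rightarrow> tm \<Rightarrow> nat \<Rightarrow> tm" where
  "xi_chain z w j =
     foldl (\<lambda>acc (i, c). cmp i acc c) z (zip [0..<j] (map (\<lambda>i. Xi (sk True i w)) [0..<j]))"

lemma xi_chain_0 [simp]: "xi_chain z w 0 = z"
  by (simp add: xi_chain_def)

lemma xi_chain_Suc: "xi_chain z w (Suc j) = cmp j (xi_chain z w j) (Xi (sk True j w))"
  by (simp add: xi_chain_def)

definition sk_spec :: "bool \<Rightarrow> nat \<Rightarrow> tm \<Rightarrow> bool" where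
  "sk_spec b k t \<longleftrightarrow> coherent (sk b k t) \<and> dim (sk b k t) = min k (dim t)
     \<and> verts (sk b k t) = face_verts b k t
     \<and> (\<forall>b' k'. face_verts b' k' (sk b k t) =
                 (if k' < min k (dim t) then face_verts b' k' t else face_verts b k t))"

lemma sk_spec_above_dim: "dim t \<le> k \<Longrightarrow> coherent t \<Longrightarrow> sk_spec b k t"
  unfolding sk_spec_def by (auto simp: sk_above_dim face_verts_above_dim min_def)

lemma UN_insert_0:
  "(\<Union>l<(k::nat). insert (0::nat) (f l)) = (if k = 0 then {} else insert 0 (\<Union>l<k. f l))"
  by (cases "k = 0") auto

lemma Xi_source_props:
  assumes "sk_spec True j w" "j \<le> dim w"
  defines "s \<equiv> Xi (sk True j w)"
  shows "coherent s" "dim s = Suc j" "verts s = insert 0 (face_verts True j w)"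
    "face_verts b k s = (if Suc j \<le> k then insert 0 (face_verts True j w)
       else if b then (if k = 0 then {0} else insert 0 (face_verts False (k - 1) w))
       else if k = 0 then (if j = 0 then face_verts True 0 w else face_verts False 0 w)
       else insert 0 ((if k < j then face_verts False k w else face_verts True j w)
                      \<union> (\<Union>i<k. face_verts True i w)))"
  using assms unfolding sk_spec_def by auto

definition xi_chain_faces :: "tm \<Rightarrow> tm \<Rightarrow> nat \<Rightarrow> bool \<Rightarrow> nat \<Rightarrow> nat set" where
  "xi_chain_faces z w j b k =
    (if dim z \<le> k then verts z \<union> (\<Union>l<j. insert 0 (face_verts True l w))
     else if b then (if k < j then (if k = 0 then {0} else insert 0 (face_verts False (k - 1) w))
                     else face_verts True k z \<union> (\<Union>l<j. insert 0 (face_verts True l w)))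
     else face_verts False k z \<union> (\<Union>l<min j k. insert 0 (face_verts True l w)))"

lemma xi_chain_coherent:
  assumes "coherent z" "j \<le> dim z" "j \<le> dim w" "\<forall>l<j. sk_spec True l w"
    "\<forall>b k. k < j \<longrightarrow> face_verts b k z = face_verts b k w"
  shows "coherent (xi_chain z w j) \<and> dim (xi_chain z w j) = dim z
    \<and> verts (xi_chain z w j) = verts z \<union> (\<Union>l<j. insert 0 (face_verts True l w))
    \<and> (\<forall>b k. face_verts b k (xi_chain z w j) = xi_chain_faces z w j b k)"
  using assms
proof (induction j)
  case 0
  then show ?case by (auto simp: xi_chain_faces_def face_verts_above_dim)
next
  case (Suc j)
  define a where "a = xi_chain z w j"
  have a: "coherent a" "dim a = dim z" "verts a = verts z \<union> (\<Union>l<j. insert 0 (face_verts True l w))"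
     "\<And>b k. face_verts b k a = xi_chain_faces z w j b k"
    using Suc unfolding a_def by auto
  define c where "c = lift (dim z - Suc j) (Xi (sk True j w))"
  have src: "sk_spec True j w" "j \<le> dim w" using Suc.prems(3,4) by auto
  have c: "coherent c" "dim c = dim z" "verts c = insert 0 (face_verts True j w)"
    "\<And>b k. face_verts b k c = face_verts b k (Xi (sk True j w))"
    using Xi_source_props[OF src] Suc.prems(2) unfolding c_def by auto
  have unfold: "xi_chain z w (Suc j) = Cmp j a c"
    using a(2) Suc.prems(2) Xi_source_props(2)[OF src]
    unfolding xi_chain_Suc c_def a_def by (simp add: cmp_dim_le)
  have zw: "\<And>b k. k \<le> j \<Longrightarrow> face_verts b k z = face_verts b k w"
    using Suc.prems(5) by auto
  have jz: "j < dim z" "j < dim w" using Suc.prems(2,3) by auto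
  note faces = a(4) c(4) Xi_source_props(4)[OF src] xi_chain_faces_def
  have "face_verts b k c = face_verts b k a" if "k < j" for b k
    using that jz zw[of k] unfolding faces by (auto simp: UN_insert_0 min_def)
  moreover have "face_verts False j c = face_verts True j a"
    using jz zw[of j] unfolding faces by (auto simp: UN_insert_0)
  ultimately have "coherent (Cmp j a c)"
    using a(1,2) c(1,2) jz by auto
  moreover have "verts (Cmp j a c) = verts z \<union> (\<Union>l<Suc j. insert 0 (face_verts True l w))"
    using a(3) c(3) by (auto simp: lessThan_Suc)
  moreover have "face_verts b k (Cmp j a c) = xi_chain_faces z w (Suc j) b k" for b k
  proof -
    consider "dim z \<le> k" | "k < j" | "k = j" | "j < k" "k < dim z" by linarith
    then show ?thesis
      using jz zw[of k] Suc.prems(4) a(2,3) c(2,3) unfolding face_verts.simps(4) faces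
      by cases (cases b; auto simp: UN_insert_0 min_def lessThan_Suc)+
  qed
  ultimately show ?case using a(2) unfolding unfold by simp
qed

lemma sk_spec_Cmp:
  assumes coh: "coherent (Cmp p y x)" and x: "\<And>b. sk_spec b k x" and y: "\<And>b. sk_spec b k y"
  shows "sk_spec b k (Cmp p y x)"
proof -
  consider "dim x \<le> k" | "k \<le> p" | "p < k" "k < dim x" by linarith
  then show ?thesis
  proof cases
    case 1 then show ?thesis using coh by (intro sk_spec_above_dim) auto
  next
    case 2 then show ?thesis using coh x[of True] y[of False] unfolding sk_spec_def by (cases b) auto
  next
    case 3
    then have "sk b k (Cmp p y x) = Cmp p (sk b k y) (sk b k x)" by simp
    then show ?thesis using 3 coh x[of b] y[of b] unfolding sk_spec_def by (auto simp: min_def)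
  qed
qed

lemma sk_spec_Xi_source:
  assumes "0 < k" "k \<le> dim x" and x: "sk_spec False (k - 1) x"
  shows "sk_spec True k (Xi x)"
proof -
  define s where "s = sk False (k - 1) x"
  have s: "coherent s" "dim s = k - 1" "verts s = face_verts False (k - 1) x"
    "\<And>b' k'. face_verts b' k' s = (if k' < k - 1 then face_verts b' k' x else face_verts False (k - 1) x)"
    using x assms(1,2) unfolding s_def sk_spec_def by (auto simp: min_def)
  have "face_verts b' k' (Xi s) = (if k' < k then face_verts b' k' (Xi x) else insert 0 (face_verts False (k - 1) x))"
    for b' k'
  proof -
    have "(\<Union>i<k'. face_verts True i s) = (\<Union>i<k'. face_verts True i x)" if "k' < k"
      using s(4) that by (intro SUP_cong) auto
    then show ?thesis
      using s assms(1,2)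
        by (cases b'; cases "k' = 0"; cases "k' = k - 1") (auto simp: face_verts_above_dim)
  qed
  moreover have "sk True k (Xi x) = Xi s" using assms(1,2) unfolding s_def by simp
  ultimately show ?thesis using s assms(1,2) unfolding sk_spec_def by (auto simp: min_def)
qed

lemma sk_spec_Xi_target:
  assumes k: "k \<le> dim x" and x: "sk_spec False k x"
    and sources: "\<forall>l<k. sk_spec True l (sk False k x)"
  shows "sk_spec False k (Xi x)"
proof -
  define z where "z = sk False k x"
  have sz: "coherent z" "dim z = k" "verts z = face_verts False k x"
    "\<And>b' k'. face_verts b' k' z = (if k' < k then face_verts b' k' x else face_verts False k x)"
    using x k unfolding z_def sk_spec_def by (auto simp: min_def)
  have chain: "coherent (xi_chain z z k) \<and> dim (xi_chain z z k) = k
      \<and> verts (xi_chain z z k) = verts z \<union> (\<Union>l<k. insert 0 (face_verts True l z))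
      \<and> (\<forall>b k'. face_verts b k' (xi_chain z z k) = xi_chain_faces z z k b k')"
    using xi_chain_coherent[of z k z] sz sources unfolding z_def by auto
  have Uz: "(\<Union>l<j. face_verts True l z) = (\<Union>l<j. face_verts True l x)" if "j \<le> k" for j
    using sz(4) that by (intro SUP_cong) auto
  have "sk False k (Xi x) = xi_chain z z k"
    using k unfolding xi_chain_def z_def by (simp add: Let_def)
  moreover have verts_chain: "verts (xi_chain z z k) = face_verts False k (Xi x)"
    using chain sz(3) Uz[of k] k by (auto simp: UN_insert_0)
  moreover have "face_verts b' k' (xi_chain z z k)
      = (if k' < k then face_verts b' k' (Xi x) else face_verts False k (Xi x))" for b' k'
  proof (cases "k \<le> k'")
    case True then show ?thesis using chain verts_chain sz(2) by (simp add: xi_chain_faces_def)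
  next
    case False
    then show ?thesis using chain k sz(2,4) Uz[of k']
      by (cases b') (auto simp: xi_chain_faces_def UN_insert_0 min_def)
  qed
  ultimately show ?thesis using chain k unfolding sk_spec_def by (auto simp: min_def)
qed

lemma sk_spec_if_coherent: "coherent t \<Longrightarrow> sk_spec b k t"
proof (induction k arbitrary: t b rule: less_induct)
  case (less k)
  show ?case using less.prems
  proof (induction t arbitrary: b)
    case (Bs t)
    then have "sk_spec b k t" by simp
    then show ?case unfolding sk_spec_def by (auto simp: if_distrib)
  next
    case Or
    then show ?case unfolding sk_spec_def by auto
  next
    case (Idt x)
    then have "sk_spec b k x" by simp
    then show ?case using Idt.prems
      by (cases "k \<le> dim x") (auto simp: sk_spec_def face_verts_above_dim)
  next
    case (Cmp p y x)
    then show ?case by (intro sk_spec_Cmp) auto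
  next
    case (Xi x)
    consider "dim (Xi x) \<le> k" | "b" "k = 0" | "b" "0 < k" "k \<le> dim x" | "\<not> b" "k \<le> dim x"
      by fastforce
    then show ?case
    proof cases
      case 1 then show ?thesis using Xi.prems by (intro sk_spec_above_dim) auto
    next
      case 2 then show ?thesis unfolding sk_spec_def by auto
    next
      case 3 then show ?thesis using Xi.prems less.IH[of "k - 1" x False] sk_spec_Xi_source[of k x]
        by simp
    next
      case 4
      then have "sk_spec False k x" using Xi by simp
      then have "coherent (sk False k x)" unfolding sk_spec_def by blast
      then show ?thesis using 4 \<open>sk_spec False k x\<close> less.IH sk_spec_Xi_target[of k x]
        by simp
    qed
  qed
qed

lemma
  assumes "coherent t"
  shows coherent_sk: "coherent (sk b k t)"
    and dim_sk: "dim (sk b k t) = min k (dim t)"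
    and verts_sk: "verts (sk b k t) = face_verts b k t"
    and face_verts_sk: "face_verts b' k' (sk b k t)
          = (if k' < min k (dim t) then face_verts b' k' t else face_verts b k t)"
  using sk_spec_if_coherent[OF assms] unfolding sk_spec_def by auto

definition same_verts :: "tm \<Rightarrow> tm \<Rightarrow> bool" where
  "same_verts t u \<longleftrightarrow>
     dim t = dim u \<and> verts t = verts u \<and> (\<forall>b k. face_verts b k t = face_verts b k u)"

(* The pieces of XiCmpRhs p y x = (t_(p+1) y *_0 xi *_1 ... *_(p-1) xi *_p xi_x) *_(p+1) xi_y:
   z is the target, c the bracketed chain and a the left factor. *)
context
  fixes p :: nat and y x z c a :: tm
  assumes coh: "coherent (Cmp p y x)"
  defines "z \<equiv> sk False (Suc p) y"
    and "c \<equiv> xi_chain z x p"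
    and "a \<equiv> Cmp p (lift (dim x - p) c) (Xi x)"
begin

private lemma Cmp_parts: "coherent x" "coherent y" "dim y = dim x" "p < dim x"
    "k < p \<Longrightarrow> face_verts b k y = face_verts b k x" "face_verts False p x = face_verts True p y"
  using coh by auto

private lemma target_face_props: "coherent z" "dim z = Suc p" "verts z = face_verts False (Suc p) y"
    "face_verts b k z = (if k < Suc p then face_verts b k y else face_verts False (Suc p) y)"
  using Cmp_parts coherent_sk dim_sk verts_sk face_verts_sk unfolding z_def by (auto simp: min_def)

private lemma chain_props: "coherent c" "dim c = Suc p"
    "verts c = face_verts False (Suc p) y \<union> (\<Union>l<p. insert 0 (face_verts True l x))"
    "face_verts b k c = xi_chain_faces z x p b k"
  using xi_chain_coherent[of z p x] target_face_props Cmp_parts sk_spec_if_coherent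
  unfolding c_def by auto

private lemma XiCmpRhs_unfold: "XiCmpRhs p y x = Cmp (Suc p) a (Xi y)"
proof -
  have "cmp p c (Xi x) = a"
    using chain_props(2) Cmp_parts(4) unfolding cmp_def a_def by (simp add: max_def)
  moreover have "cmp (Suc p) a (Xi y) = Cmp (Suc p) a (Xi y)"
    using Cmp_parts(3) unfolding a_def by (simp add: cmp_def)
  ultimately show ?thesis unfolding XiCmpRhs_def c_def z_def xi_chain_def by simp
qed

private lemma verts_chain_absorbed:
  assumes "Suc p \<le> j"
  shows "verts c \<subseteq> insert 0 (face_verts False j y \<union> face_verts False j x)"
proof -
  have "face_verts False (Suc p) y \<subseteq> face_verts False j y"
    using assms face_verts_mono[OF Cmp_parts(2), of "Suc p" j False False] by (cases "Suc p = j") auto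
  moreover have "face_verts True l x \<subseteq> face_verts False j x" if "l < p" for l
    using that assms face_verts_mono[OF Cmp_parts(1), of l j True False] by auto
  ultimately show ?thesis unfolding chain_props(3) by blast
qed

private lemma face_verts_Xi_Cmp_low:
  assumes "k \<le> p"
  shows "face_verts b k (Xi (Cmp p y x)) = face_verts b k (Cmp (Suc p) a (Xi y))"
proof -
  have "(\<Union>i<k. face_verts True i (Cmp p y x)) = (\<Union>i<k. face_verts True i x)"
    using assms Cmp_parts(4) by (intro SUP_cong) auto
  moreover have "face_verts False k c = face_verts False k y \<union> (\<Union>l<k. insert 0 (face_verts True l x))"
    using assms target_face_props unfolding chain_props xi_chain_faces_def by (auto simp: min_def)
  ultimately show ?thesis
    using assms Cmp_parts(3,4) unfolding a_def by (cases b) (auto simp: UN_insert_0)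
qed

private lemma face_verts_Xi_Cmp_mid:
  "face_verts b (Suc p) (Xi (Cmp p y x)) = face_verts b (Suc p) (Cmp (Suc p) a (Xi y))"
proof -
  have "(\<Union>i<Suc p. face_verts True i (Cmp p y x)) = (\<Union>i<Suc p. face_verts True i x)"
    using Cmp_parts(4) by (intro SUP_cong) auto
  moreover have "face_verts False (Suc p) c = face_verts False (Suc p) y \<union> (\<Union>l<p. insert 0 (face_verts True l x))"
    using target_face_props unfolding chain_props xi_chain_faces_def by simp
  ultimately show ?thesis
    using Cmp_parts(3,4) unfolding a_def by (cases b) (auto simp: UN_insert_0 face_verts_above_dim)
qed

private lemma face_verts_Xi_Cmp_high:
  assumes k: "Suc p < k" "k \<le> dim x"
  shows "face_verts b k (Xi (Cmp p y x)) = face_verts b k (Cmp (Suc p) a (Xi y))"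
proof (cases b)
  case True
  then show ?thesis
    using k Cmp_parts(3,4) verts_chain_absorbed[of "k - 1"] chain_props(2)
    unfolding a_def by (auto simp: face_verts_above_dim)
next
  case False
  have x: "face_verts True i x \<subseteq> face_verts True i (Cmp p y x)"
    and xy: "face_verts True i (Cmp p y x) \<subseteq> face_verts True i y \<union> face_verts True i x"
    if "i < k" for i
    using that k Cmp_parts(3,4) by auto
  have y: "face_verts True i y \<subseteq> face_verts False k x \<union> face_verts True i (Cmp p y x)" if "i < k" for i
  proof -
    consider "i < p" | "i = p" | "p < i" by linarith
    then show ?thesis
      using that k Cmp_parts(3-6) face_verts_mono[OF Cmp_parts(1), of p k False False] by cases auto
  qed
  have L: "face_verts False k (Xi (Cmp p y x))
      = insert 0 (face_verts False k y \<union> face_verts False k x \<union> (\<Union>i<k. face_verts True i (Cmp p y x)))"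
    using k Cmp_parts(3,4) by (auto simp: face_verts_above_dim)
  have R: "face_verts False k (Cmp (Suc p) a (Xi y)) = verts c
      \<union> insert 0 (face_verts False k x \<union> (\<Union>i<k. face_verts True i x))
      \<union> insert 0 (face_verts False k y \<union> (\<Union>i<k. face_verts True i y))"
    using k Cmp_parts(3,4) chain_props(2) unfolding a_def by (auto simp: face_verts_above_dim)
  have set_identity: "\<And>(V::nat set) Y X Ux Uy Uc. V \<subseteq> insert 0 (Y \<union> X) \<Longrightarrow> Uc \<subseteq> Uy \<union> Ux
      \<Longrightarrow> Ux \<subseteq> Uc \<Longrightarrow> Uy \<subseteq> X \<union> Uc
      \<Longrightarrow> insert 0 (Y \<union> X \<union> Uc) = V \<union> insert 0 (X \<union> Ux) \<union> insert 0 (Y \<union> Uy)"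
    by blast
  have "face_verts False k (Xi (Cmp p y x)) = face_verts False k (Cmp (Suc p) a (Xi y))"
    unfolding L R
  proof (rule set_identity)
    show "verts c \<subseteq> insert 0 (face_verts False k y \<union> face_verts False k x)"
      using verts_chain_absorbed k by simp
    show "(\<Union>i<k. face_verts True i (Cmp p y x)) \<subseteq> (\<Union>i<k. face_verts True i y) \<union> (\<Union>i<k. face_verts True i x)"
      using xy by (intro UN_least) blast
    show "(\<Union>i<k. face_verts True i x) \<subseteq> (\<Union>i<k. face_verts True i (Cmp p y x))"
      using x by (intro UN_mono) auto
    show "(\<Union>i<k. face_verts True i y) \<subseteq> face_verts False k x \<union> (\<Union>i<k. face_verts True i (Cmp p y x))"
      using y by (intro UN_least) blast
  qed
  then show ?thesis using False by simp
qed

lemma same_verts_Xi_Cmp: "same_verts (Xi (Cmp p y x)) (XiCmpRhs p y x)"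
proof -
  have "face_verts b k (Xi (Cmp p y x)) = face_verts b k (Cmp (Suc p) a (Xi y))" for b k
  proof -
    consider "k \<le> p" | "k = Suc p" | "Suc p < k" "k \<le> dim x" | "Suc (dim x) \<le> k" by linarith
    then show ?thesis
    proof cases
      case 4
      then show ?thesis
        using Cmp_parts(3,4) verts_chain_absorbed[of "dim x"] face_verts_subset_verts[of False "dim x"]
        unfolding a_def by (auto simp: face_verts_above_dim)
    qed (use face_verts_Xi_Cmp_low face_verts_Xi_Cmp_mid face_verts_Xi_Cmp_high in auto)
  qed
  moreover have "verts (Xi (Cmp p y x)) = verts (Cmp (Suc p) a (Xi y))"
    using verts_chain_absorbed[of "dim x"] Cmp_parts(4) face_verts_subset_verts[of False "dim x"]
    unfolding a_def by auto
  ultimately show ?thesis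
    using Cmp_parts(3) unfolding XiCmpRhs_unfold same_verts_def a_def by simp
qed

end

lemma coherent_CmpI:
  assumes x: "coherent x" and y: "coherent y" and dims: "dim x = dim y" "p < dim x"
    and faces: "same_verts (sk False p x) (sk True p y)"
  shows "coherent (Cmp p y x)"
proof -
  have "face_verts b k y = face_verts b k x" if "k < p" for b k
    using faces that dims face_verts_sk[OF x, of b k False p] face_verts_sk[OF y, of b k True p]
    unfolding same_verts_def by auto
  moreover have "face_verts False p x = face_verts True p y"
    using faces verts_sk[OF x] verts_sk[OF y] unfolding same_verts_def by simp
  ultimately show ?thesis using x y dims by auto
qed

lemma same_verts_sk:
  "coherent t \<Longrightarrow> coherent u \<Longrightarrow> same_verts t u \<Longrightarrow> same_verts (sk b k t) (sk b k u)"
  using dim_sk verts_sk face_verts_sk unfolding same_verts_def by metis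

lemma same_verts_unit_l:
  assumes x: "coherent x" and p: "p < dim x"
  shows "same_verts (Cmp p (lift (dim x - p) (sk False p x)) x) x"
proof -
  have "face_verts b k (Cmp p (lift (dim x - p) (sk False p x)) x) = face_verts b k x" for b k
  proof -
    consider "dim x \<le> k" | "k \<le> p" | "p < k" "k < dim x" by linarith
    then show ?thesis
      using p face_verts_sk[OF x] dim_sk[OF x] verts_sk[OF x] face_verts_subset_verts[of False p x]
        face_verts_mono[OF x, of p k False b]
      by cases (auto simp: face_verts_above_dim)
  qed
  then show ?thesis
    using p verts_sk[OF x] dim_sk[OF x] face_verts_subset_verts[of False p x]
    unfolding same_verts_def by auto
qed

lemma same_verts_unit_r:
  assumes x: "coherent x" and p: "p < dim x"
  shows "same_verts (Cmp p x (lift (dim x - p) (sk True p x))) x"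
proof -
  have "face_verts b k (Cmp p x (lift (dim x - p) (sk True p x))) = face_verts b k x" for b k
  proof -
    consider "dim x \<le> k" | "k \<le> p" | "p < k" "k < dim x" by linarith
    then show ?thesis
      using p face_verts_sk[OF x] dim_sk[OF x] verts_sk[OF x] face_verts_subset_verts[of True p x]
        face_verts_mono[OF x, of p k True b]
      by cases (auto simp: face_verts_above_dim)
  qed
  then show ?thesis
    using p verts_sk[OF x] dim_sk[OF x] face_verts_subset_verts[of True p x]
    unfolding same_verts_def by auto
qed

lemma same_verts_Xi_Idt: "coherent u \<Longrightarrow> same_verts (Xi (Idt u)) (Idt (Xi u))"
  using face_verts_subset_verts[of _ _ u] face_verts_mono[of u]
  unfolding same_verts_def by (auto simp: face_verts_above_dim; blast)

lemma same_verts_Xi_Xi: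
  assumes "coherent u"
  shows "same_verts (Xi (Xi u)) (Idt (Xi u))"
proof -
  have "face_verts b k (Xi (Xi u)) = face_verts b k (Xi u)" for b k
  proof -
    consider "Suc (dim u) < k" | "k = Suc (dim u)" | "k = 0" | "0 < k" "k \<le> dim u" by linarith
    then show ?thesis
    proof cases
      case 2
      have "face_verts True i (Xi u) \<subseteq> insert 0 (verts u)" for i
        using face_verts_subset_verts[of True i "Xi u"] by simp
      then show ?thesis using 2
        by (cases b) (auto simp: face_verts_above_dim dest: subsetD[OF face_verts_subset_verts])
    next
      case 4
      show ?thesis
      proof (cases b)
        case True
        have "(\<Union>i<k - 1. face_verts True i u) \<subseteq> face_verts False (k - 1) u"
          using face_verts_mono[OF assms] by blast
        then show ?thesis using 4 True by (cases "k - 1 = 0") auto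
      next
        case False
        have "face_verts True i (Xi u) \<subseteq> insert 0 (face_verts False k u)" if "i < k" for i
        proof -
          have "face_verts False (i - 1) u \<subseteq> face_verts False k u"
            using that face_verts_mono[OF assms, of "i - 1" k False False] by simp
          then show ?thesis using that 4 by auto
        qed
        then have U: "(\<Union>i<k. face_verts True i (Xi u)) \<subseteq> insert 0 (face_verts False k u)"
          by blast
        also have "insert 0 (face_verts False k u) \<subseteq> face_verts False k (Xi u)"
          using 4 by auto
        finally have "face_verts False k (Xi u) \<union> (\<Union>i<k. face_verts True i (Xi u)) = face_verts False k (Xi u)"
          by blast
        moreover have "face_verts False k (Xi (Xi u))
            = insert 0 (face_verts False k (Xi u) \<union> (\<Union>i<k. face_verts True i (Xi u)))"
          using 4 by (simp del: face_verts.simps add: face_verts.simps(5)[of False k "Xi u"])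
        moreover have "0 \<in> face_verts False k (Xi u)"
          using 4 by simp
        ultimately show ?thesis using False by (simp add: insert_absorb)
      qed
    qed auto
  qed
  then show ?thesis using assms unfolding same_verts_def by simp
qed

lemma wfT_eqT_coherent:
  assumes bw: "\<And>x. bw x \<Longrightarrow> coherent x"
    and be: "\<And>x y. be x y \<Longrightarrow> coherent x \<and> coherent y \<and> same_verts x y"
  shows "wfT bw be t \<Longrightarrow> coherent t"
    and "eqT bw be t u \<Longrightarrow> coherent t \<and> coherent u \<and> same_verts t u"
proof (induction t and t u rule: wfT_eqT.inducts)
  case (wf_Cmp x y p)
  then show ?case by (intro coherent_CmpI) auto
next
  case (wf_sk t b k)
  then show ?case using coherent_sk by blast
next
  case (eq_Bs x y)
  then show ?case using be[of x y] by (auto simp: same_verts_def)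
next
  case (eq_sk t u b k)
  then show ?case using coherent_sk same_verts_sk by blast
next
  case (eta_Cmp p y x)
  then show ?case using bw[of "Cmp p y x"] unfolding same_verts_def by (auto simp: image_Un)
next
  case (eta_Idt x)
  then show ?case using bw[of "Idt x"] unfolding same_verts_def by auto
next
  case (unit_l p x)
  then show ?case using same_verts_unit_l[of x p] by auto
next
  case (unit_r p x)
  then show ?case using same_verts_unit_r[of x p] by auto
next
  case (id_cmp p y x)
  then show ?case unfolding same_verts_def by (auto simp: face_verts_above_dim)
next
  case (xi_cmp p y x)
  then show ?case using same_verts_Xi_Cmp[of p y x] by auto
next
  case (xi_id u)
  then show ?case using same_verts_Xi_Idt by auto
next
  case (xi_xi u)
  then show ?case using same_verts_Xi_Xi by auto
next
  case xi_or
  then show ?case by (simp add: same_verts_def face_verts.simps(3))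
qed (use bw in \<open>auto simp: same_verts_def\<close>)

lemma wfO_0: "wfO 0 = wfT (\<lambda>_. False) (\<lambda>_ _. False)"
  and eqO_0: "eqO 0 = eqT (\<lambda>_. False) (\<lambda>_ _. False)"
  and wfO_Suc: "wfO (Suc k) = wfT (wfO k) (eqO k)"
  and eqO_Suc: "eqO (Suc k) = eqT (wfO k) (eqO k)"
  by (simp_all add: wfO_def eqO_def)

lemma wfO_eqO_term_model: "\<exists>B E. wfO k = wfT B E \<and> eqO k = eqT B E"
  by (cases k) (auto simp: wfO_0 eqO_0 wfO_Suc eqO_Suc)

lemma wfO_eqO_coherent:
  "(\<forall>t. wfO n t \<longrightarrow> coherent t)
    \<and> (\<forall>t u. eqO n t u \<longrightarrow> coherent t \<and> coherent u \<and> same_verts t u)"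
proof (induction n)
  case 0
  show ?case unfolding wfO_0 eqO_0 using wfT_eqT_coherent[of "\<lambda>_. False" "\<lambda>_ _. False"]
    by blast
next
  case (Suc n)
  show ?case unfolding wfO_Suc eqO_Suc using wfT_eqT_coherent[of "wfO n" "eqO n"] Suc by blast
qed

lemma eqO_imp_verts_eq: "eqO n t u \<Longrightarrow> verts t = verts u"
  using wfO_eqO_coherent[of n] unfolding same_verts_def by blast

lemma wfO_Or: "wfO k Or"
  and wfO_Xi: "wfO k t \<Longrightarrow> wfO k (Xi t)"
  and wfO_Idt: "wfO k t \<Longrightarrow> wfO k (Idt t)"
  and eqO_refl: "wfO k t \<Longrightarrow> eqO k t t"
  and eqO_trans: "eqO k t u \<Longrightarrow> eqO k u v \<Longrightarrow> eqO k t v"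
  and eqO_Xi: "eqO k t u \<Longrightarrow> eqO k (Xi t) (Xi u)"
  and eqO_Xi_Idt: "wfO k u \<Longrightarrow> eqO k (Xi (Idt u)) (Idt (Xi u))"
  and eqO_Xi_Xi: "wfO k u \<Longrightarrow> eqO k (Xi (Xi u)) (Idt (Xi u))"
  and eqO_Xi_Or: "eqO k (Xi Or) (Idt Or)"
  using wfO_eqO_term_model[of k] by (auto intro: wfT_eqT.intros)

lemma wfO_Bs_pow: "wfO k t \<Longrightarrow> wfO (k + i) ((Bs ^^ i) t)"
  by (induction i) (auto simp: wfO_Suc intro: wfT_eqT.intros)

lemma eqO_Idt_Bs_pow:
  assumes "eqO k t (Idt u)" "wfO k u"
  shows "eqO (k + i) ((Bs ^^ i) t) (Idt ((Bs ^^ i) u))"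
proof (induction i)
  case (Suc i)
  have "wfO (k + i) (Idt ((Bs ^^ i) u))"
    using wfO_Idt wfO_Bs_pow[OF assms(2)] by blast
  then have "eqT (wfO (k + i)) (eqO (k + i)) (Bs (Idt ((Bs ^^ i) u))) (Idt (Bs ((Bs ^^ i) u)))"
    using wfO_eqO_term_model[of "k + i"] by (auto intro: wfT_eqT.intros)
  then show ?case using Suc by (auto simp: eqO_Suc intro: wfT_eqT.intros)
qed (use assms in simp)

lemma dim_Bs_pow [simp]: "dim ((Bs ^^ i) t) = dim t"
  by (induction i) auto

lemma verts_Bs_pow: "verts ((Bs ^^ i) t) = (\<lambda>x. x + i) ` verts t"
  by (induction i) (auto simp: image_image)

lemma sorted_map_minus: "sorted xs \<Longrightarrow> sorted (map (\<lambda>l. l - i) (xs :: nat list))"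
  by (auto simp: sorted_map intro: sorted_wrt_mono_rel[of _ "(\<le>)"] diff_le_mono)

lemma dim_sc: "dim (sc is) = length is - 1"
  by (induction "is" rule: sc.induct) auto

lemma verts_sc: "is \<noteq> [] \<Longrightarrow> sorted is \<Longrightarrow> verts (sc is) = set is"
proof (induction "is" rule: sc.induct)
  case (3 i j r)
  have "sorted (map (\<lambda>l. l - i) (j # r))" using 3(3) sorted_map_minus by fastforce
  then have "verts (sc (map (\<lambda>l. l - i) (j # r))) = (\<lambda>l. l - i) ` set (j # r)"
    using 3(1) by simp
  moreover have "\<forall>l\<in>set (j # r). i \<le> l" using 3(3) by auto
  ultimately show ?case by (auto simp: verts_Bs_pow image_image image_iff)
qed (simp_all add: verts_Bs_pow)

lemma wfO_sc: "is \<noteq> [] \<Longrightarrow> \<forall>x\<in>set is. x \<le> n \<Longrightarrow> wfO n (sc is)"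
proof (induction "is" arbitrary: n rule: sc.induct)
  case (2 i)
  then show ?case using wfO_Bs_pow[OF wfO_Or, of "n - i" i] by simp
next
  case (3 i j r)
  then have "wfO (n - i) (Xi (sc (map (\<lambda>l. l - i) (j # r))))" by (intro wfO_Xi 3(1)) auto
  from wfO_Bs_pow[OF this, of i] 3(3) show ?case by simp
qed simp

lemma wfO_dim_sc_SI: "is \<in> SI n m \<Longrightarrow> wfO n (sc is) \<and> dim (sc is) = m"
  using wfO_sc[of "is" n] dim_sc[of "is"] unfolding SI_def by force

lemma inj_on_cellO_sc: "inj_on (\<lambda>is. cellO n (sc is)) (SI n m)"
proof (rule inj_onI)
  fix xs ys
  assume xs: "xs \<in> SI n m" and ys: "ys \<in> SI n m" and eq: "cellO n (sc xs) = cellO n (sc ys)"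
  have "wfO n (sc ys)" using ys by (intro wfO_sc) (auto simp: SI_def)
  then have "eqO n (sc xs) (sc ys)" using eq eqO_refl unfolding cellO_def by blast
  then have "verts (sc xs) = verts (sc ys)" by (rule eqO_imp_verts_eq)
  moreover have "xs \<noteq> []" "ys \<noteq> []" "sorted xs" "sorted ys"
    using xs ys by (auto simp: SI_def strict_sorted_imp_sorted)
  ultimately have "set xs = set ys" using verts_sc by metis
  then show "xs = ys" using xs ys strict_sorted_equal by (auto simp: SI_def)
qed

lemma sc_map_Suc: "l \<noteq> [] \<Longrightarrow> sc (map Suc l) = Bs (sc l)"
proof (induction l rule: sc.induct)
  case (3 i j r)
  have "map (\<lambda>x. x - Suc i) (map Suc (j # r)) = map (\<lambda>l. l - i) (j # r)" by simp
  then show ?case by (simp add: comp_def)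
qed auto

lemma sc_0_map_Suc: "l \<noteq> [] \<Longrightarrow> sc (0 # map Suc l) = Xi (Bs (sc l))"
  using sc_map_Suc[of l] by (cases l) auto

lemma SI_0: "SI 0 m = (if m = 0 then {[0]} else {})"
proof -
  have "xs \<in> SI 0 m \<longleftrightarrow> (m = 0 \<and> xs = [0])" for xs
  proof
    assume a: "xs \<in> SI 0 m"
    then have "set xs \<subseteq> {0}" "length xs = Suc m" "distinct xs"
      by (auto simp: SI_def strict_sorted_iff)
    then have "card (set xs) \<le> 1" using card_mono[of "{0::nat}" "set xs"] by simp
    then have m0: "m = 0" using \<open>distinct xs\<close> \<open>length xs = Suc m\<close> distinct_card
      by fastforce
    then obtain a where "xs = [a]" using \<open>length xs = Suc m\<close> by (auto simp: length_Suc_conv)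
    then show "m = 0 \<and> xs = [0]" using m0 \<open>set xs \<subseteq> {0}\<close> by auto
  qed (auto simp: SI_def)
  then show ?thesis by auto
qed

lemma map_Suc_pred: "sorted_wrt (<) xs \<Longrightarrow> \<forall>x\<in>set xs. 0 < (x::nat) \<Longrightarrow>
   xs = map Suc (map (\<lambda>x. x - 1) xs) \<and> sorted_wrt (<) (map (\<lambda>x. x - 1) xs)"
proof
  assume "\<forall>x\<in>set xs. 0 < (x::nat)"
  then show "xs = map Suc (map (\<lambda>x. x - 1) xs)" by (induction xs) auto
next
  assume a: "sorted_wrt (<) xs" "\<forall>x\<in>set xs. 0 < (x::nat)"
  show "sorted_wrt (<) (map (\<lambda>x. x - 1) xs)" unfolding sorted_wrt_map
    using a by (induction xs) auto
qed

lemma SI_Suc: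
  "SI (Suc k) m = map Suc ` SI k m \<union> (if m = 0 then {[0]} else (\<lambda>l. 0 # map Suc l) ` SI k (m - 1))"
proof (intro equalityI subsetI)
  fix xs assume xs: "xs \<in> SI (Suc k) m"
  then obtain a r where ar: "xs = a # r" by (cases xs) (auto simp: SI_def)
  have s: "sorted_wrt (<) xs" "length xs = Suc m" "\<forall>x\<in>set xs. x \<le> Suc k" using xs
    by (auto simp: SI_def)
  show "xs \<in> map Suc ` SI k m \<union> (if m = 0 then {[0]} else (\<lambda>l. 0 # map Suc l) ` SI k (m - 1))"
  proof (cases "a = 0")
    case False
    then have pos: "\<forall>x\<in>set xs. 0 < x" using s(1) ar by auto
    have "map (\<lambda>x. x - 1) xs \<in> SI k m" using map_Suc_pred[OF s(1) pos] s
      by (auto simp: SI_def)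
    then show ?thesis using map_Suc_pred[OF s(1) pos] by blast
  next
    case True
    show ?thesis
    proof (cases "m = 0")
      case True then show ?thesis using s(2) ar \<open>a = 0\<close> by simp
    next
      case m0: False
      have sr: "sorted_wrt (<) r" and pos: "\<forall>x\<in>set r. 0 < x" using s(1) ar True by auto
      have "map (\<lambda>x. x - 1) r \<in> SI k (m - 1)" using map_Suc_pred[OF sr pos] s ar m0
        by (auto simp: SI_def)
      moreover have "xs = 0 # map Suc (map (\<lambda>x. x - 1) r)" using map_Suc_pred[OF sr pos] ar True
        by simp
      ultimately have "xs \<in> (\<lambda>l. 0 # map Suc l) ` SI k (m - 1)" by blast
      then show ?thesis using m0 by simp
    qed
  qed
next
  fix xs assume "xs \<in> map Suc ` SI k m \<union> (if m = 0 then {[0]} else (\<lambda>l. 0 # map Suc l) ` SI k (m - 1))"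
  then show "xs \<in> SI (Suc k) m"
    by (auto simp: SI_def sorted_wrt_map split: if_splits)
qed

lemma Gen_sc: "Gen n m = sc ` SI n m"
proof (induction n arbitrary: m)
  case 0 then show ?case by (simp add: SI_0)
next
  case (Suc k)
  have ne: "\<And>l m. l \<in> SI k m \<Longrightarrow> l \<noteq> []" by (auto simp: SI_def)
  have A: "sc ` map Suc ` SI k m = Bs ` sc ` SI k m"
    unfolding image_image using sc_map_Suc ne by (intro image_cong) auto
  have B: "sc ` (\<lambda>l. 0 # map Suc l) ` SI k (m - 1) = Xi ` Bs ` sc ` SI k (m - 1)"
    unfolding image_image using sc_0_map_Suc ne by (intro image_cong) auto
  show ?case unfolding SI_Suc Gen.simps Suc image_Un using A B by auto
qed

lemma sc_0_0_eqO_Idt: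
  "\<forall>i\<in>set r. i \<le> n \<Longrightarrow> eqO n (sc (0 # 0 # r)) (Idt (sc (0 # r)))"
proof (cases r)
  case (Cons a r')
  moreover assume "\<forall>i\<in>set r. i \<le> n"
  ultimately have "wfO n (sc r)" by (intro wfO_sc) auto
  then show ?thesis using Cons eqO_Xi_Xi by simp
qed (simp add: eqO_Xi_Or)

lemma not_strict_sorted_map_minus:
  assumes "\<forall>l\<in>set xs. i \<le> l" "\<not> sorted_wrt (<) xs"
  shows "\<not> sorted_wrt (<) (map (\<lambda>l. l - i) (xs :: nat list))"
proof
  assume "sorted_wrt (<) (map (\<lambda>l. l - i) xs)"
  then have "sorted_wrt (\<lambda>x y. x - i < y - i) xs" unfolding sorted_wrt_map .
  then have "sorted_wrt (<) xs"
    by (rule sorted_wrt_mono_rel[rotated]) (use assms(1) in auto)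
  then show False using assms(2) by simp
qed

lemma sc_degenerate_eqO_Idt:
  "sorted is \<Longrightarrow> \<forall>i\<in>set is. i \<le> n \<Longrightarrow> \<not> sorted_wrt (<) is \<Longrightarrow>
   \<exists>u. wfO n u \<and> Suc (dim u) = length is - 1 \<and> eqO n (sc is) (Idt u)"
proof (induction "is" arbitrary: n rule: sc.induct)
  case (3 i j r)
  define r' where "r' = map (\<lambda>l. l - i) (j # r)"
  have ge: "\<forall>l\<in>set (j # r). i \<le> l" using 3(2) by auto
  have r': "sorted r'" "\<forall>l\<in>set r'. l \<le> n - i" "r' \<noteq> []"
    using 3(2,3) sorted_map_minus unfolding r'_def by auto
  have "\<exists>u'. wfO (n - i) u' \<and> Suc (dim u') = length r' \<and> eqO (n - i) (Xi (sc r')) (Idt u')"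
  proof (cases "i = j")
    case True
    then have "r' = 0 # map (\<lambda>l. l - i) r" unfolding r'_def by simp
    then show ?thesis
      using sc_0_0_eqO_Idt[of _ "n - i"] wfO_sc[of r' "n - i"] r' by (auto simp: dim_sc)
  next
    case False
    then have "\<not> sorted_wrt (<) (j # r)"
      using 3(2,4) by (auto intro: le_less_trans)
    then have "\<not> sorted_wrt (<) r'"
      using ge not_strict_sorted_map_minus unfolding r'_def by blast
    then obtain u where "wfO (n - i) u" "Suc (dim u) = length r' - 1" "eqO (n - i) (sc r') (Idt u)"
      using 3(1)[of "n - i"] r' unfolding r'_def by blast
    then show ?thesis
      using eqO_trans[OF eqO_Xi eqO_Xi_Idt] wfO_Xi r'(3) by (intro exI[of _ "Xi u"]) auto
  qed
  then obtain u' where "wfO (n - i) u'" "Suc (dim u') = length r'" "eqO (n - i) (Xi (sc r')) (Idt u')"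
    by blast
  then show ?case
    using eqO_Idt_Bs_pow[of "n - i" _ u' i] wfO_Bs_pow[of "n - i" u' i] 3(3)
    unfolding r'_def by (intro exI[of _ "(Bs ^^ i) u'"]) simp
qed auto

lemma bij_betw_map_upt_SI:
  "bij_betw (\<lambda>f. map f [0..<Suc m]) {f \<in> {0..m} \<rightarrow>\<^sub>E {0..n}. strict_mono_on {0..m} f} (SI n m)"
proof (rule bij_betw_imageI)
  show "inj_on (\<lambda>f. map f [0..<Suc m]) {f \<in> {0..m} \<rightarrow>\<^sub>E {0..n}. strict_mono_on {0..m} f}"
  proof (rule inj_onI)
    fix f g assume f: "f \<in> {f \<in> {0..m} \<rightarrow>\<^sub>E {0..n}. strict_mono_on {0..m} f}"
      and g: "g \<in> {f \<in> {0..m} \<rightarrow>\<^sub>E {0..n}. strict_mono_on {0..m} f}"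
      and e: "map f [0..<Suc m] = map g [0..<Suc m]"
    have "\<And>i. i \<in> {0..m} \<Longrightarrow> f i = g i" using e
      by (auto simp: map_eq_conv simp del: upt_Suc)
    then show "f = g" using f g by (intro PiE_ext[of f "{0..m}" "\<lambda>_. {0..n}"]) auto
  qed
next
  show "(\<lambda>f. map f [0..<Suc m]) ` {f \<in> {0..m} \<rightarrow>\<^sub>E {0..n}. strict_mono_on {0..m} f} = SI n m"
  proof (intro equalityI subsetI)
    fix xs assume "xs \<in> (\<lambda>f. map f [0..<Suc m]) ` {f \<in> {0..m} \<rightarrow>\<^sub>E {0..n}. strict_mono_on {0..m} f}"
    then obtain f where f: "f \<in> {0..m} \<rightarrow>\<^sub>E {0..n}" "strict_mono_on {0..m} f" and xs: "xs = map f [0..<Suc m]"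
      by auto
    have "sorted_wrt (<) xs" unfolding xs sorted_wrt_map
      by (rule sorted_wrt_mono_rel[OF _ sorted_wrt_upt])
        (use f(2) in \<open>auto intro: strict_mono_onD[of "{0..m}" f] simp del: upt_Suc\<close>)
    moreover have "\<forall>i\<in>set xs. i \<le> n" using f(1) unfolding xs
      by (auto simp: PiE_iff simp del: upt_Suc)
    ultimately show "xs \<in> SI n m" unfolding SI_def using xs by simp
  next
    fix xs assume xs: "xs \<in> SI n m"
    define f where "f = (\<lambda>i. if i \<in> {0..m} then xs ! i else undefined)"
    have l: "length xs = Suc m" and s: "sorted_wrt (<) xs" and b: "\<forall>i\<in>set xs. i \<le> n" using xs
      by (auto simp: SI_def)
    have "f \<in> {0..m} \<rightarrow>\<^sub>E {0..n}" unfolding f_def PiE_iff extensional_def using l b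
      by auto
    moreover have "strict_mono_on {0..m} f" unfolding f_def using l s
      by (intro strict_mono_onI) (auto intro: sorted_wrt_nth_less)
    moreover have "map f [0..<Suc m] = xs" unfolding f_def using l
      by (intro nth_equalityI) (auto simp del: upt_Suc)
    ultimately show "xs \<in> (\<lambda>f. map f [0..<Suc m]) ` {f \<in> {0..m} \<rightarrow>\<^sub>E {0..n}. strict_mono_on {0..m} f}"
      by (intro image_eqI[of _ _ f]) auto
  qed
qed

theorem mainTheorem7:
  fixes n m :: nat
  shows "(\<forall>is \<in> SI n m. wfO n (sc is) \<and> dim (sc is) = m)
    \<and> cellO n ` Gen n m = (\<lambda>is. cellO n (sc is)) ` SI n m
    \<and> inj_on (\<lambda>is. cellO n (sc is)) (SI n m)
    \<and> bij_betw (\<lambda>f. cellO n (sc (map f [0..<Suc m])))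
         {f \<in> {0..m} \<rightarrow>\<^sub>E {0..n}. strict_mono_on {0..m} f} (cellO n ` Gen n m)
    \<and> (\<forall>is. length is = Suc m \<and> sorted is \<and> (\<forall>i\<in>set is. i \<le> n) \<and> \<not> sorted_wrt (<) is
         \<longrightarrow> (\<exists>u. wfO n u \<and> Suc (dim u) = m \<and> eqO n (sc is) (Idt u)))
    \<and> (\<forall>rest. length rest + 1 = m \<and> sorted rest \<and> (\<forall>i\<in>set rest. i \<le> n)
         \<longrightarrow> eqO n (sc (0 # 0 # rest)) (Idt (sc (0 # rest))))"
proof (intro conjI)
  show "\<forall>is \<in> SI n m. wfO n (sc is) \<and> dim (sc is) = m"
    using wfO_dim_sc_SI by blast
  show gen: "cellO n ` Gen n m = (\<lambda>is. cellO n (sc is)) ` SI n m"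
    unfolding Gen_sc image_image ..
  show inj: "inj_on (\<lambda>is. cellO n (sc is)) (SI n m)"
    by (rule inj_on_cellO_sc)
  have "bij_betw (\<lambda>is. cellO n (sc is)) (SI n m) (cellO n ` Gen n m)"
    using inj gen by (simp add: bij_betw_def)
  from bij_betw_trans[OF bij_betw_map_upt_SI this]
  show "bij_betw (\<lambda>f. cellO n (sc (map f [0..<Suc m])))
      {f \<in> {0..m} \<rightarrow>\<^sub>E {0..n}. strict_mono_on {0..m} f} (cellO n ` Gen n m)"
    by (simp add: comp_def)
  show "\<forall>is. length is = Suc m \<and> sorted is \<and> (\<forall>i\<in>set is. i \<le> n) \<and> \<not> sorted_wrt (<) is
         \<longrightarrow> (\<exists>u. wfO n u \<and> Suc (dim u) = m \<and> eqO n (sc is) (Idt u))"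
    using sc_degenerate_eqO_Idt by fastforce
  show "\<forall>rest. length rest + 1 = m \<and> sorted rest \<and> (\<forall>i\<in>set rest. i \<le> n)
         \<longrightarrow> eqO n (sc (0 # 0 # rest)) (Idt (sc (0 # rest)))"
    using sc_0_0_eqO_Idt by blast
qed

end
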